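(* Let $T>0$, $L>0$, $\alpha\in\mathbb{R}\setminus\{0\}$, $n\ge2$ an integer, $x_0>L$, $0<t_0<T$, $\beta>0$, and $\psi(t,x)=(x-x_0)^2-\beta(t-t_0)^2$. Then there exist $\lambda_0>0$ and $C>0$ such that for all $\lambda>\lambda_0$ and all $v\in C_0^\infty((0,T)\times(0,L);\mathbb{R})$, $$\sum_{m=0}^{n-1}\int_0^T\!\!\int_0^L\lambda^{2n-2m-1}e^{2\lambda\psi}|\partial_x^m v|^2\,dx\,dt\le C\int_0^T\!\!\int_0^L e^{2\lambda\psi}\big|\alpha\partial_t v+\partial_x^n v\big|^2\,dx\,dt.$$ *)

theory Defs
  imports "HOL-Analysis.Analysis"
begin

text \<open>Functions of (t,x) are represented as maps on real \<times> real.
  pd True f is the partial derivative in t, pd False f the partial derivative in x.\<close>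

fun pd :: "bool \<Rightarrow> (real \<times> real \<Rightarrow> real) \<Rightarrow> real \<times> real \<Rightarrow> real" where
  "pd True f = (\<lambda>(t,x). deriv (\<lambda>s. f (s, x)) t)"
| "pd False f = (\<lambda>(t,x). deriv (\<lambda>y. f (t, y)) x)"

text \<open>Iterated partial derivative, applying the list of directions (last element first).\<close>
definition iterpd :: "bool list \<Rightarrow> (real \<times> real \<Rightarrow> real) \<Rightarrow> real \<times> real \<Rightarrow> real" where
  "iterpd ws f = foldr pd ws f"

definition smooth2 :: "(real \<times> real \<Rightarrow> real) \<Rightarrow> bool" where
  "smooth2 f \<longleftrightarrow> (\<forall>ws. continuous_on UNIV (iterpd ws f) \<and>
      (\<forall>t x. (\<lambda>s. iterpd ws f (s, x)) differentiable (at t) \<and>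
             (\<lambda>y. iterpd ws f (t, y)) differentiable (at x)))"

definition test_fun :: "real \<Rightarrow> real \<Rightarrow> (real \<times> real \<Rightarrow> real) \<Rightarrow> bool" where
  "test_fun T L v \<longleftrightarrow> smooth2 v \<and> compact (closure {p. v p \<noteq> 0}) \<and>
      closure {p. v p \<noteq> 0} \<subseteq> {0<..<T} \<times> {0<..<L}"

end

theory Submission
  imports Defs
begin

text \<open>
  Fix \<open>t\<close> and let \<open>E(x) = exp (2 lam \<psi>(t, x))\<close>, so that \<open>E' = 4 lam (x - x0) E\<close>. In
  \<open>L\<^sup>2([0, L], E dx)\<close> the formal adjoint of \<open>d/dx\<close> is \<open>D\<^sup>* g = - g' - 4 lam (x - x0) g\<close>,
  and \<open>D\<^sup>* (f') = (D\<^sup>* f)' + 4 lam f\<close>. Hence \<open>\<parallel>u'\<parallel>\<^sup>2 = \<parallel>D\<^sup>* u\<parallel>\<^sup>2 + 4 lam \<parallel>u\<parallel>\<^sup>2\<close>, and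
  iterating, \<open>\<parallel>u\<^sup>(\<^sup>n\<^sup>)\<parallel>\<^sup>2 - \<parallel>(D\<^sup>*)\<^sup>n u\<parallel>\<^sup>2 \<ge> 4 lam \<parallel>u\<^sup>(\<^sup>n\<^sup>-\<^sup>1\<^sup>)\<parallel>\<^sup>2\<close>. Expanding
  \<open>|\<alpha> \<partial>\<^sub>t v + \<partial>\<^sub>x\<^sup>n v|\<^sup>2\<close> and moving \<open>(D\<^sup>*)\<^sup>n\<close> onto \<open>\<partial>\<^sub>t v + c v\<close>, where \<open>\<partial>\<^sub>t E = 2 c E\<close>,
  the mixed terms become the time derivative of \<open>E v \<partial>\<^sub>x\<^sup>n v\<close>, which integrates to zero over
  \<open>[0, T]\<close>. What remains bounds \<open>2 lam \<parallel>\<partial>\<^sub>x\<^sup>n\<^sup>-\<^sup>1 v\<parallel>\<^sup>2\<close> up to an error \<open>O(lam\<^sup>2) \<parallel>v\<parallel>\<^sup>2\<close>.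
  Finally the Hardy-type bound \<open>4 lam\<^sup>2 (x0 - L)\<^sup>2 \<parallel>w\<parallel>\<^sup>2 \<le> \<parallel>w'\<parallel>\<^sup>2\<close> gains a factor
  \<open>lam\<^sup>2\<close> per \<open>x\<close>-derivative, so for large \<open>lam\<close> the error is absorbed and all lower-order
  terms are controlled.
\<close>

section \<open>Iterated partial derivatives of smooth functions\<close>

lemma iterpd_Nil [simp]: "iterpd [] f = f"
  by (simp add: iterpd_def)

lemma iterpd_Cons: "iterpd (w # ws) f = pd w (iterpd ws f)"
  by (simp add: iterpd_def)

lemma iterpd_append: "iterpd (ws' @ ws) f = iterpd ws' (iterpd ws f)"
  by (simp add: iterpd_def)

lemma smooth2_iterpd: "smooth2 f \<Longrightarrow> smooth2 (iterpd ws f)"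
  unfolding smooth2_def by (simp add: iterpd_append[symmetric])

lemma smooth2_continuous_iterpd: "smooth2 f \<Longrightarrow> continuous_on UNIV (iterpd ws f)"
  unfolding smooth2_def by blast

lemma smooth2_DERIV_x:
  assumes "smooth2 f"
  shows "((\<lambda>y. iterpd ws f (t, y)) has_real_derivative iterpd (False # ws) f (t, y)) (at y)"
  using assms unfolding smooth2_def iterpd_Cons
  by (simp add: DERIV_deriv_iff_real_differentiable[symmetric])

lemma smooth2_DERIV_t:
  assumes "smooth2 f"
  shows "((\<lambda>s. iterpd ws f (s, x)) has_real_derivative iterpd (True # ws) f (s, x)) (at s)"
  using assms unfolding smooth2_def iterpd_Cons
  by (simp add: DERIV_deriv_iff_real_differentiable[symmetric])

lemma continuous_on_slice_x:
  "continuous_on UNIV (f :: real \<times> real \<Rightarrow> real) \<Longrightarrow> continuous_on S (\<lambda>x. f (t, x))"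
  by (rule continuous_on_compose2) (auto intro!: continuous_intros)

lemma has_real_derivative_integral_param:
  fixes g g' :: "real \<times> real \<Rightarrow> real"
  assumes g: "continuous_on UNIV g" and g': "continuous_on UNIV g'"
    and dg: "\<And>s w. ((\<lambda>s. g (s, w)) has_real_derivative g' (s, w)) (at s)"
  shows "((\<lambda>s. integral {a..b} (\<lambda>w. g (s, w))) has_real_derivative
           integral {a..b} (\<lambda>w. g' (t, w))) (at t)"
proof -
  have "continuous_on (UNIV \<times> cbox a b) (\<lambda>(s, w). g' (s, w))"
    using continuous_on_subset[OF g'] by (simp add: case_prod_eta)
  then have "((\<lambda>s. integral (cbox a b) (\<lambda>w. g (s, w))) has_field_derivative
      integral (cbox a b) (\<lambda>w. g' (t, w))) (at t within UNIV)"
    by (intro leibniz_rule_field_derivative[where fx = "\<lambda>s w. g' (s, w)"])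
      (auto intro: DERIV_subset dg integrable_continuous_real continuous_on_slice_x[OF g])
  then show ?thesis by simp
qed

lemma smooth2_pd_t_eq_integral:
  assumes sm: "smooth2 g" and "a \<le> z"
  shows "iterpd [True] g (t, z)
    = iterpd [True] g (t, a) + integral {a..z} (\<lambda>w. iterpd [True, False] g (t, w))"
proof -
  have ftc: "g (s, z) - g (s, a) = integral {a..z} (\<lambda>w. iterpd [False] g (s, w))" for s
    using smooth2_DERIV_x[OF sm, of "[]"] \<open>a \<le> z\<close>
    by (intro integral_unique[symmetric] fundamental_theorem_of_calculus)
      (auto simp: has_real_derivative_iff_has_vector_derivative[symmetric] intro: DERIV_subset)
  have "((\<lambda>s. g (s, z) - g (s, a)) has_real_derivative iterpd [True] g (t, z) - iterpd [True] g (t, a)) (at t)"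
    using smooth2_DERIV_t[OF sm, of "[]"] by (auto intro!: derivative_intros)
  moreover have "((\<lambda>s. g (s, z) - g (s, a)) has_real_derivative
      integral {a..z} (\<lambda>w. iterpd [True, False] g (t, w))) (at t)"
    unfolding ftc using smooth2_DERIV_t[OF sm, of "[False]"]
    by (intro has_real_derivative_integral_param smooth2_continuous_iterpd sm) simp
  ultimately have "iterpd [True] g (t, z) - iterpd [True] g (t, a)
      = integral {a..z} (\<lambda>w. iterpd [True, False] g (t, w))"
    by (rule DERIV_unique)
  then show ?thesis by simp
qed

lemma smooth2_pd_commute:
  assumes sm: "smooth2 g"
  shows "pd False (pd True g) = pd True (pd False g)"
proof (rule ext, clarify)
  fix t y :: real
  define a where "a = y - 1"
  define gt gxt where "gt = iterpd [True] g" and "gxt = iterpd [True, False] g"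
  have "((\<lambda>z. gt (t, a) + integral {a..z} (\<lambda>w. gxt (t, w))) has_real_derivative gxt (t, y)) (at y)"
  proof -
    have "((\<lambda>z. integral {a..z} (\<lambda>w. gxt (t, w))) has_real_derivative gxt (t, y)) (at y within {a..y+1})"
      unfolding gxt_def
      by (intro integral_has_real_derivative continuous_on_slice_x smooth2_continuous_iterpd sm)
        (simp add: a_def)
    moreover have "at y within {a..y+1} = at y"
      by (intro at_within_interior) (simp add: a_def)
    ultimately show ?thesis by (auto intro!: derivative_eq_intros)
  qed
  then have "((\<lambda>z. gt (t, z)) has_real_derivative gxt (t, y)) (at y)"
  proof (rule has_field_derivative_transform_within_open[where S = "{a<..}"])
    show "gt (t, a) + integral {a..z} (\<lambda>w. gxt (t, w)) = gt (t, z)" if "z \<in> {a<..}" for z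
      using smooth2_pd_t_eq_integral[OF sm, of a z t] that by (simp add: gt_def gxt_def)
  qed (simp_all add: a_def)
  moreover have "((\<lambda>z. gt (t, z)) has_real_derivative pd False (pd True g) (t, y)) (at y)"
    using smooth2_DERIV_x[OF sm, of "[True]"] by (simp add: gt_def iterpd_Cons)
  ultimately have "gxt (t, y) = pd False (pd True g) (t, y)"
    by (rule DERIV_unique)
  then show "pd False (pd True g) (t, y) = pd True (pd False g) (t, y)"
    by (simp add: gxt_def iterpd_Cons)
qed

lemma smooth2_iterpd_x_t_commute:
  assumes "smooth2 v"
  shows "iterpd (replicate n False @ [True]) v = iterpd (True # replicate n False) v"
proof (induction n)
  case (Suc n)
  have "iterpd (replicate (Suc n) False @ [True]) v = pd False (pd True (iterpd (replicate n False) v))"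
    using Suc by (simp only: replicate_Suc append_Cons iterpd_Cons)
  also have "\<dots> = iterpd (True # replicate (Suc n) False) v"
    by (simp only: smooth2_pd_commute[OF smooth2_iterpd[OF assms]] replicate_Suc iterpd_Cons)
  finally show ?case .
qed simp

lemma pd_eq_0_if_vanishes_near:
  assumes "0 < e" and F: "\<And>q. q \<in> ball p e \<Longrightarrow> F q = 0"
  shows "pd w F p = 0"
proof -
  obtain t x where p: "p = (t, x)" by (cases p)
  have dt: "((\<lambda>s. F (s, x)) has_real_derivative 0) (at t)"
  proof (rule has_field_derivative_transform_within_open[where f = "\<lambda>_. 0" and S = "ball t e"])
    show "0 = F (s, x)" if "s \<in> ball t e" for s
      using F[of "(s, x)"] that by (simp add: p dist_Pair_Pair)
  qed (use \<open>0 < e\<close> in auto)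
  have dx: "((\<lambda>y. F (t, y)) has_real_derivative 0) (at x)"
  proof (rule has_field_derivative_transform_within_open[where f = "\<lambda>_. 0" and S = "ball x e"])
    show "0 = F (t, y)" if "y \<in> ball x e" for y
      using F[of "(t, y)"] that by (simp add: p dist_Pair_Pair)
  qed (use \<open>0 < e\<close> in auto)
  show ?thesis
    unfolding p using DERIV_imp_deriv[OF dt] DERIV_imp_deriv[OF dx] by (cases w) simp_all
qed

lemma iterpd_eq_0_outside_support:
  assumes "p \<notin> closure {p. v p \<noteq> 0}"
  shows "iterpd ws v p = 0"
  using assms
proof (induction ws arbitrary: p)
  case Nil
  then show ?case using closure_subset[of "{p. v p \<noteq> 0}"] by auto
next
  case (Cons w ws)
  obtain e where "0 < e" and e: "ball p e \<subseteq> - closure {p. v p \<noteq> 0}"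
    by (rule openE[of "- closure {p. v p \<noteq> 0}" p]) (use Cons.prems in auto)
  have "iterpd ws v q = 0" if "q \<in> ball p e" for q
    using e that by (intro Cons.IH) auto
  then show ?case
    unfolding iterpd_Cons by (rule pd_eq_0_if_vanishes_near[OF \<open>0 < e\<close>])
qed

lemma integral_rectangle:
  fixes f :: "real \<times> real \<Rightarrow> real"
  assumes "continuous_on UNIV f"
  shows "integral ({0..T} \<times> {0..L}) f = integral {0..T} (\<lambda>t. integral {0..L} (\<lambda>x. f (t, x)))"
proof -
  have "{0..T} \<times> {0..L} = cbox (0, 0) (T, L)"
    by (simp add: cbox_Pair_eq)
  then show ?thesis
    using continuous_on_subset[OF assms] by (simp add: integral_prod_continuous)
qed

lemma integral_rectangle_mono:
  fixes f g :: "real \<times> real \<Rightarrow> real"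
  assumes f: "continuous_on UNIV f" and g: "continuous_on UNIV g"
    and le: "\<And>t. t \<in> {0..T} \<Longrightarrow> integral {0..L} (\<lambda>x. f (t, x)) \<le> integral {0..L} (\<lambda>x. g (t, x))"
  shows "integral ({0..T} \<times> {0..L}) f \<le> integral ({0..T} \<times> {0..L}) g"
proof -
  have param_integrable: "(\<lambda>t. integral {0..L} (\<lambda>x. h (t, x))) integrable_on {0..T}"
    if "continuous_on UNIV h" for h :: "real \<times> real \<Rightarrow> real"
  proof -
    have "continuous_on {0..T} (\<lambda>t. integral (cbox 0 L) (\<lambda>x. h (t, x)))"
      by (rule integral_continuous_on_param) (auto intro: continuous_on_subset[OF that])
    then show ?thesis by (intro integrable_continuous_real) simp
  qed
  show ?thesis
    unfolding integral_rectangle[OF f] integral_rectangle[OF g]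
    by (rule integral_le[OF param_integrable[OF f] param_integrable[OF g]]) (use le in auto)
qed

lemma integral_lincomb3:
  fixes f g h :: "'a::euclidean_space \<Rightarrow> real"
  assumes "f integrable_on S" "g integrable_on S" "h integrable_on S"
  shows "integral S (\<lambda>x. a * f x + b * g x + c * h x) = a * integral S f + b * integral S g + c * integral S h"
  using assms by (simp add: integral_add integrable_add integrable_on_mult_right)

lemma integrable_on_rectangle:
  fixes f :: "real \<times> real \<Rightarrow> real"
  assumes "continuous_on UNIV f"
  shows "f integrable_on {0..T} \<times> {0..L}"
proof -
  have "{0..T} \<times> {0..L} = cbox (0, 0) (T, L)"
    by (simp add: cbox_Pair_eq)
  then show ?thesis
    using integrable_continuous[OF continuous_on_subset[OF assms]] by simp
qed

section \<open>Weighted estimates in one space variable\<close>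

locale carleman_weight =
  fixes L lam x0 :: real and E :: "real \<Rightarrow> real"
  assumes L_pos: "0 < L" and lam_nonneg: "0 \<le> lam"
    and E_DERIV: "\<And>x. (E has_real_derivative 4 * lam * (x - x0) * E x) (at x)"
    and E_pos: "\<And>x. 0 < E x"
begin

definition flat_at_ends :: "(real \<Rightarrow> real) \<Rightarrow> bool" where
  "flat_at_ends f \<longleftrightarrow> (\<exists>F. F 0 = f \<and> (\<forall>k x. (F k has_real_derivative F (Suc k) x) (at x))
                          \<and> (\<forall>k. F k 0 = 0 \<and> F k L = 0))"

text \<open>The formal adjoint of \<open>d/dx\<close> in \<open>L\<^sup>2([0,L], E dx)\<close> on functions vanishing at \<open>0\<close> and \<open>L\<close>.\<close>

definition deriv_adj :: "(real \<Rightarrow> real) \<Rightarrow> real \<Rightarrow> real" where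
  "deriv_adj f = (\<lambda>x. - deriv f x - 4 * lam * (x - x0) * f x)"

definition wip :: "(real \<Rightarrow> real) \<Rightarrow> (real \<Rightarrow> real) \<Rightarrow> real" where
  "wip f g = integral {0..L} (\<lambda>x. E x * f x * g x)"

lemma flat_at_ends_DERIV:
  assumes "flat_at_ends f"
  shows "(f has_real_derivative deriv f x) (at x)"
proof -
  obtain F where "F 0 = f" and "\<forall>k x. (F k has_real_derivative F (Suc k) x) (at x)"
    using assms unfolding flat_at_ends_def by blast
  then have "(f has_real_derivative F 1 x) (at x)" by auto
  with DERIV_imp_deriv[OF this] show ?thesis by simp
qed

lemma flat_at_ends_deriv:
  assumes "flat_at_ends f"
  shows "flat_at_ends (deriv f)"
proof -
  obtain F where F: "F 0 = f" "\<forall>k x. (F k has_real_derivative F (Suc k) x) (at x)"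
    "\<forall>k. F k 0 = 0 \<and> F k L = 0"
    using assms unfolding flat_at_ends_def by blast
  have "deriv f = F 1"
  proof
    fix x
    show "deriv f x = F 1 x"
      using F(1,2) by (intro DERIV_imp_deriv) auto
  qed
  with F show ?thesis
    unfolding flat_at_ends_def by (intro exI[of _ "\<lambda>k. F (Suc k)"]) auto
qed

lemma flat_at_ends_endpoints:
  assumes "flat_at_ends f"
  shows "f 0 = 0" and "f L = 0"
  using assms unfolding flat_at_ends_def by auto

lemma flat_at_ends_continuous_on: "flat_at_ends f \<Longrightarrow> continuous_on S f"
  using DERIV_isCont[OF flat_at_ends_DERIV] by (simp add: continuous_at_imp_continuous_on)

lemma E_continuous_on: "continuous_on S E"
  by (intro continuous_at_imp_continuous_on ballI DERIV_isCont[OF E_DERIV])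

lemma flat_at_ends_lincomb:
  assumes "flat_at_ends f" and "flat_at_ends g"
  shows "flat_at_ends (\<lambda>x. a * f x + b * g x)"
proof -
  obtain F where F: "F 0 = f" "\<forall>k x. (F k has_real_derivative F (Suc k) x) (at x)"
    "\<forall>k. F k 0 = 0 \<and> F k L = 0"
    using assms(1) unfolding flat_at_ends_def by blast
  obtain G where G: "G 0 = g" "\<forall>k x. (G k has_real_derivative G (Suc k) x) (at x)"
    "\<forall>k. G k 0 = 0 \<and> G k L = 0"
    using assms(2) unfolding flat_at_ends_def by blast
  show ?thesis
    unfolding flat_at_ends_def using F G
    by (intro exI[of _ "\<lambda>k x. a * F k x + b * G k x"]) (auto intro!: derivative_eq_intros)
qed

lemma flat_at_ends_affine_mult:
  assumes "flat_at_ends f"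
  shows "flat_at_ends (\<lambda>x. (p * x + q) * f x)"
proof -
  obtain F where F: "F 0 = f" "\<forall>k x. (F k has_real_derivative F (Suc k) x) (at x)"
    "\<forall>k. F k 0 = 0 \<and> F k L = 0"
    using assms unfolding flat_at_ends_def by blast
  \<comment> \<open>Leibniz rule for the \<open>k\<close>-th derivative of \<open>(p x + q) f x\<close>.\<close>
  define G where "G k x = (p * x + q) * F k x + real k * p * F (k - 1) x" for k x
  have "(G k has_real_derivative G (Suc k) x) (at x)" for k x
    using F(2) unfolding G_def
    by (cases k) (auto intro!: derivative_eq_intros simp: algebra_simps)
  then show ?thesis
    unfolding flat_at_ends_def using F by (intro exI[of _ G]) (auto simp: G_def)
qed

lemma deriv_lincomb:
  assumes "flat_at_ends f" and "flat_at_ends g"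
  shows "deriv (\<lambda>x. a * f x + b * g x) = (\<lambda>x. a * deriv f x + b * deriv g x)"
proof
  fix x
  show "deriv (\<lambda>x. a * f x + b * g x) x = a * deriv f x + b * deriv g x"
    using flat_at_ends_DERIV[OF assms(1)] flat_at_ends_DERIV[OF assms(2)]
    by (intro DERIV_imp_deriv) (auto intro!: derivative_eq_intros)
qed

lemma funpow_deriv_lincomb:
  assumes "flat_at_ends f" and "flat_at_ends g"
  shows "(deriv ^^ k) (\<lambda>x. a * f x + b * g x) = (\<lambda>x. a * (deriv ^^ k) f x + b * (deriv ^^ k) g x)"
proof (induction k)
  case (Suc k)
  have "flat_at_ends ((deriv ^^ k) f)" "flat_at_ends ((deriv ^^ k) g)"
    by (induction k) (auto intro: flat_at_ends_deriv assms)
  with Suc show ?case by (simp add: deriv_lincomb)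
qed simp

lemma deriv_adj_lincomb:
  assumes "flat_at_ends f" and "flat_at_ends g"
  shows "deriv_adj (\<lambda>x. a * f x + b * g x) = (\<lambda>x. a * deriv_adj f x + b * deriv_adj g x)"
  unfolding deriv_adj_def deriv_lincomb[OF assms] by (auto simp: algebra_simps)

lemma flat_at_ends_deriv_adj:
  assumes "flat_at_ends f"
  shows "flat_at_ends (deriv_adj f)"
proof -
  have "deriv_adj f = (\<lambda>x. (-1) * deriv f x + (-1) * ((4 * lam * x + (- 4 * lam * x0)) * f x))"
    unfolding deriv_adj_def by (auto simp: algebra_simps)
  then show ?thesis
    by (simp only: flat_at_ends_lincomb flat_at_ends_affine_mult flat_at_ends_deriv assms)
qed

lemma flat_at_ends_funpow_deriv_adj: "flat_at_ends f \<Longrightarrow> flat_at_ends ((deriv_adj ^^ j) f)"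
  by (induction j) (auto intro: flat_at_ends_deriv_adj)

lemma flat_at_ends_funpow_deriv: "flat_at_ends f \<Longrightarrow> flat_at_ends ((deriv ^^ j) f)"
  by (induction j) (auto intro: flat_at_ends_deriv)

lemma deriv_adj_deriv:
  assumes "flat_at_ends f"
  shows "deriv_adj (deriv f) = (\<lambda>x. deriv (deriv_adj f) x + 4 * lam * f x)"
proof
  fix x
  have "deriv (deriv_adj f) x = - deriv (deriv f) x - 4 * lam * f x - 4 * lam * (x - x0) * deriv f x"
    unfolding deriv_adj_def
    using flat_at_ends_DERIV[OF assms] flat_at_ends_DERIV[OF flat_at_ends_deriv[OF assms]]
    by (intro DERIV_imp_deriv) (auto intro!: derivative_eq_intros simp: algebra_simps)
  then show "deriv_adj (deriv f) x = deriv (deriv_adj f) x + 4 * lam * f x"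
    unfolding deriv_adj_def by (simp add: algebra_simps)
qed

text \<open>For \<open>j = 0\<close> the correction term vanishes; \<open>j - 1\<close> is then truncated to \<open>0\<close>.\<close>

lemma funpow_deriv_adj_deriv:
  assumes "flat_at_ends y"
  shows "(deriv_adj ^^ j) (deriv y)
    = (\<lambda>x. deriv ((deriv_adj ^^ j) y) x + 4 * lam * real j * (deriv_adj ^^ (j - 1)) y x)"
proof (induction j)
  case (Suc j)
  define z r c where "z = (deriv_adj ^^ j) y" and "r = (deriv_adj ^^ (j - 1)) y"
    and "c = 4 * lam * real j"
  have flat: "flat_at_ends z" "flat_at_ends (deriv z)" "flat_at_ends r"
    unfolding z_def r_def by (simp_all add: flat_at_ends_funpow_deriv_adj flat_at_ends_deriv assms)
  have "(deriv_adj ^^ Suc j) (deriv y) = deriv_adj (\<lambda>x. 1 * deriv z x + c * r x)"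
    using Suc by (simp add: z_def r_def c_def)
  also have "\<dots> = (\<lambda>x. 1 * deriv_adj (deriv z) x + c * deriv_adj r x)"
    by (rule deriv_adj_lincomb[OF flat(2,3)])
  also have "\<dots> = (\<lambda>x. deriv (deriv_adj z) x + 4 * lam * real (Suc j) * z x)"
  proof -
    have "c * deriv_adj r x = c * z x" for x
      by (cases j) (simp_all add: z_def r_def c_def)
    then show ?thesis
      by (simp only: deriv_adj_deriv[OF flat(1)]) (simp add: c_def algebra_simps)
  qed
  finally show ?case by (simp add: z_def)
qed simp

lemma wip_has_integral:
  assumes "flat_at_ends f" and "flat_at_ends g"
  shows "((\<lambda>x. E x * f x * g x) has_integral wip f g) {0..L}"
  unfolding wip_def using assms
  by (intro integrable_integral integrable_continuous_real continuous_intros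
      E_continuous_on flat_at_ends_continuous_on)

lemma wip_commute: "wip f g = wip g f"
  unfolding wip_def by (simp add: mult_ac)

lemma wip_self_nonneg: "flat_at_ends f \<Longrightarrow> 0 \<le> wip f f"
  unfolding wip_def
  by (rule integral_nonneg[OF has_integral_integrable[OF wip_has_integral]])
    (simp_all add: E_pos less_imp_le mult.assoc)

lemma wip_lincomb_right:
  assumes "flat_at_ends f" "flat_at_ends g" "flat_at_ends h"
  shows "wip f (\<lambda>x. a * g x + b * h x) = a * wip f g + b * wip f h"
proof -
  have "((\<lambda>x. a * (E x * f x * g x) + b * (E x * f x * h x)) has_integral a * wip f g + b * wip f h) {0..L}"
    using assms by (intro has_integral_add has_integral_mult_right wip_has_integral)
  then have "((\<lambda>x. E x * f x * (a * g x + b * h x)) has_integral a * wip f g + b * wip f h) {0..L}"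
    by (simp add: algebra_simps)
  then show ?thesis
    unfolding wip_def by (rule integral_unique)
qed

lemma wip_square_lincomb:
  assumes f: "flat_at_ends f" and g: "flat_at_ends g"
  shows "wip (\<lambda>x. a * f x + b * g x) (\<lambda>x. a * f x + b * g x)
    = a^2 * wip f f + 2 * a * b * wip f g + b^2 * wip g g"
proof -
  define h where "h = (\<lambda>x. a * f x + b * g x)"
  have h: "flat_at_ends h"
    unfolding h_def using f g by (rule flat_at_ends_lincomb)
  have "wip h h = a * wip h f + b * wip h g"
    using wip_lincomb_right[OF h f g, of a b] unfolding h_def[symmetric] .
  also have "wip h f = a * wip f f + b * wip f g"
    using wip_lincomb_right[OF f f g, of a b] unfolding h_def[symmetric] wip_commute[of f h] .
  also have "wip h g = a * wip f g + b * wip g g"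
    using wip_lincomb_right[OF g f g, of a b] unfolding h_def[symmetric] wip_commute[of g h] wip_commute[of g f] .
  finally show ?thesis
    unfolding h_def[symmetric] by (simp add: power2_eq_square algebra_simps)
qed

lemma wip_deriv_adjoint:
  assumes "flat_at_ends f" and "flat_at_ends g"
  shows "wip (deriv f) g = wip f (deriv_adj g)"
proof -
  have "((\<lambda>x. E x * deriv f x * g x - E x * f x * deriv_adj g x) has_integral
      E L * f L * g L - E 0 * f 0 * g 0) {0..L}"
  proof (rule fundamental_theorem_of_calculus)
    fix x
    have "((\<lambda>x. E x * f x * g x) has_real_derivative
        E x * deriv f x * g x - E x * f x * deriv_adj g x) (at x)"
      unfolding deriv_adj_def
      using E_DERIV flat_at_ends_DERIV[OF assms(1)] flat_at_ends_DERIV[OF assms(2)]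
      by (auto intro!: derivative_eq_intros simp: algebra_simps)
    then show "((\<lambda>x. E x * f x * g x) has_vector_derivative
        E x * deriv f x * g x - E x * f x * deriv_adj g x) (at x within {0..L})"
      by (simp add: has_real_derivative_iff_has_vector_derivative has_vector_derivative_at_within)
  qed (use L_pos in simp)
  moreover have "((\<lambda>x. E x * deriv f x * g x - E x * f x * deriv_adj g x) has_integral
      wip (deriv f) g - wip f (deriv_adj g)) {0..L}"
    using assms by (intro has_integral_diff wip_has_integral flat_at_ends_deriv flat_at_ends_deriv_adj)
  ultimately have "E L * f L * g L - E 0 * f 0 * g 0 = wip (deriv f) g - wip f (deriv_adj g)"
    by (rule has_integral_unique)
  then show ?thesis
    using flat_at_ends_endpoints[OF assms(1)] by simp
qed

lemma wip_self: "wip f f = integral {0..L} (\<lambda>x. E x * f x ^ 2)"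
  by (simp add: wip_def power2_eq_square mult.assoc)

lemma wip_deriv_self:
  assumes "flat_at_ends f"
  shows "wip (deriv f) (deriv f) = wip (deriv_adj f) (deriv_adj f) + 4 * lam * wip f f"
proof -
  have flat: "flat_at_ends (deriv f)" "flat_at_ends (deriv_adj f)" "flat_at_ends (deriv (deriv_adj f))"
    using assms by (simp_all add: flat_at_ends_deriv flat_at_ends_deriv_adj)
  have "wip (deriv f) (deriv f) = wip f (deriv_adj (deriv f))"
    by (rule wip_deriv_adjoint[OF assms flat(1)])
  also have "\<dots> = wip f (\<lambda>x. deriv (deriv_adj f) x + 4 * lam * f x)"
    by (simp add: deriv_adj_deriv[OF assms])
  also have "\<dots> = wip f (deriv (deriv_adj f)) + 4 * lam * wip f f"
    using wip_lincomb_right[OF assms flat(3) assms, of 1 "4 * lam"] by simp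
  also have "wip f (deriv (deriv_adj f)) = wip (deriv_adj f) (deriv_adj f)"
    using wip_deriv_adjoint[OF flat(2) assms] wip_commute by metis
  finally show ?thesis .
qed

lemma wip_funpow_deriv_adj_Suc_le:
  assumes y: "flat_at_ends y"
  shows "wip ((deriv_adj ^^ Suc j) y) ((deriv_adj ^^ Suc j) y)
    \<le> wip ((deriv_adj ^^ j) (deriv y)) ((deriv_adj ^^ j) (deriv y))"
proof -
  define z r c where "z = (deriv_adj ^^ j) y" and "r = (deriv_adj ^^ (j - 1)) y"
    and "c = 4 * lam * real j"
  have flat: "flat_at_ends z" "flat_at_ends (deriv z)" "flat_at_ends r"
    unfolding z_def r_def by (simp_all add: flat_at_ends_funpow_deriv_adj flat_at_ends_deriv y)
  have cross: "c * wip (deriv z) r = c * wip z z"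
  proof (cases j)
    case (Suc i)
    then have "deriv_adj r = z" by (simp add: z_def r_def)
    then show ?thesis using wip_deriv_adjoint[OF flat(1,3)] by simp
  qed (simp add: c_def)
  have "(deriv_adj ^^ j) (deriv y) = (\<lambda>x. deriv z x + c * r x)"
    by (simp add: funpow_deriv_adj_deriv[OF y] z_def r_def c_def)
  then have "wip ((deriv_adj ^^ j) (deriv y)) ((deriv_adj ^^ j) (deriv y))
      = wip (deriv z) (deriv z) + 2 * c * wip (deriv z) r + c^2 * wip r r"
    using wip_square_lincomb[OF flat(2,3), of 1 c] by simp
  also have "\<dots> = wip (deriv_adj z) (deriv_adj z) + (4 * lam + 2 * c) * wip z z + c^2 * wip r r"
    using cross by (simp add: wip_deriv_self[OF flat(1)] algebra_simps)
  moreover have "0 \<le> (4 * lam + 2 * c) * wip z z" and "0 \<le> c^2 * wip r r"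
    using wip_self_nonneg[OF flat(1)] wip_self_nonneg[OF flat(3)] lam_nonneg
    by (simp_all add: c_def)
  moreover have "(deriv_adj ^^ Suc j) y = deriv_adj z"
    by (simp add: z_def)
  ultimately show ?thesis by simp
qed

lemma wip_funpow_deriv_adj_le:
  assumes "flat_at_ends y"
  shows "wip ((deriv_adj ^^ Suc j) y) ((deriv_adj ^^ Suc j) y)
    \<le> wip (deriv_adj ((deriv ^^ j) y)) (deriv_adj ((deriv ^^ j) y))"
  using assms
proof (induction j arbitrary: y)
  case (Suc j)
  have "wip ((deriv_adj ^^ Suc (Suc j)) y) ((deriv_adj ^^ Suc (Suc j)) y)
      \<le> wip ((deriv_adj ^^ Suc j) (deriv y)) ((deriv_adj ^^ Suc j) (deriv y))"
    by (rule wip_funpow_deriv_adj_Suc_le[OF Suc.prems])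
  also have "\<dots> \<le> wip (deriv_adj ((deriv ^^ j) (deriv y))) (deriv_adj ((deriv ^^ j) (deriv y)))"
    by (rule Suc.IH[OF flat_at_ends_deriv[OF Suc.prems]])
  finally show ?case by (simp only: funpow_Suc_right comp_def)
qed simp

lemma wip_funpow_deriv_gap:
  assumes "flat_at_ends u" and "0 < n"
  shows "4 * lam * wip ((deriv ^^ (n - 1)) u) ((deriv ^^ (n - 1)) u)
    \<le> wip ((deriv ^^ n) u) ((deriv ^^ n) u) - wip ((deriv_adj ^^ n) u) ((deriv_adj ^^ n) u)"
proof -
  obtain k where n: "n = Suc k" using assms(2) gr0_conv_Suc by blast
  then have "(deriv ^^ n) u = deriv ((deriv ^^ k) u)" and "n - 1 = k" by simp_all
  then show ?thesis
    using wip_deriv_self[OF flat_at_ends_funpow_deriv[OF assms(1), of k]]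
      wip_funpow_deriv_adj_le[OF assms(1), of k] n by simp
qed

lemma wip_funpow_deriv_adjoint:
  assumes "flat_at_ends f" and "flat_at_ends g"
  shows "wip ((deriv_adj ^^ n) f) g = wip f ((deriv ^^ n) g)"
  using assms(1)
proof (induction n arbitrary: f)
  case (Suc n)
  have "wip ((deriv_adj ^^ Suc n) f) g = wip ((deriv_adj ^^ n) (deriv_adj f)) g"
    by (simp only: funpow_Suc_right comp_def)
  also have "\<dots> = wip (deriv_adj f) ((deriv ^^ n) g)"
    by (rule Suc.IH[OF flat_at_ends_deriv_adj[OF Suc.prems]])
  also have "\<dots> = wip f ((deriv ^^ Suc n) g)"
    using wip_deriv_adjoint[OF flat_at_ends_funpow_deriv[OF assms(2)] Suc.prems, of n] wip_commute
    by (metis comp_apply funpow.simps(2))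
  finally show ?case .
qed simp

lemma wip_hardy:
  assumes u: "flat_at_ends u" and "L \<le> x0"
  shows "4 * lam^2 * (x0 - L)^2 * wip u u \<le> wip (deriv u) (deriv u)"
proof -
  define w where "w x = 2 * lam * (x - x0) * u x" for x
  have flat: "flat_at_ends w" "flat_at_ends (deriv u)"
    using flat_at_ends_affine_mult[OF u, of "2 * lam" "- 2 * lam * x0"] u
    by (simp_all add: w_def[abs_def] flat_at_ends_deriv algebra_simps)
  have dw: "deriv w x = 2 * lam * u x + 2 * lam * (x - x0) * deriv u x" for x
    unfolding w_def using flat_at_ends_DERIV[OF u]
    by (intro DERIV_imp_deriv) (auto intro!: derivative_eq_intros simp: algebra_simps)
  have "E x * u x * deriv_adj w x
      = (- 2 * lam) * (E x * u x * u x) + (- 1) * (E x * deriv u x * w x) + (- 2) * (E x * w x * w x)" for x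
    unfolding deriv_adj_def dw by (simp add: w_def algebra_simps)
  moreover have "((\<lambda>x. (- 2 * lam) * (E x * u x * u x) + (- 1) * (E x * deriv u x * w x)
      + (- 2) * (E x * w x * w x)) has_integral
      (- 2 * lam) * wip u u + (- 1) * wip (deriv u) w + (- 2) * wip w w) {0..L}"
    using u flat by (intro has_integral_add has_integral_mult_right wip_has_integral)
  ultimately have "wip u (deriv_adj w) = - 2 * lam * wip u u - wip (deriv u) w - 2 * wip w w"
    unfolding wip_def by (simp add: integral_unique)
  then have cross: "wip (deriv u) w = - lam * wip u u - wip w w"
    using wip_deriv_adjoint[OF u flat(1)] by simp
  have "0 \<le> wip (\<lambda>x. 1 * deriv u x + 1 * w x) (\<lambda>x. 1 * deriv u x + 1 * w x)"
    using flat by (intro wip_self_nonneg flat_at_ends_lincomb)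
  then have "0 \<le> wip (deriv u) (deriv u) + 2 * wip (deriv u) w + wip w w"
    using wip_square_lincomb[OF flat(2,1), of 1 1] by simp
  then have "wip w w \<le> wip (deriv u) (deriv u) - 2 * lam * wip u u"
    using cross by simp
  moreover have "0 \<le> lam * wip u u"
    using wip_self_nonneg[OF u] lam_nonneg by simp
  moreover have "4 * lam^2 * (x0 - L)^2 * wip u u \<le> wip w w"
  proof -
    have "4 * lam^2 * (x0 - L)^2 * (E x * u x * u x) \<le> E x * w x * w x" if "x \<in> {0..L}" for x
    proof -
      have "(x0 - L)^2 \<le> (x - x0)^2"
        using that \<open>L \<le> x0\<close> by (simp add: power2_commute[of x] power_mono)
      then have "4 * lam^2 * (x0 - L)^2 * (E x * u x^2) \<le> 4 * lam^2 * (x - x0)^2 * (E x * u x^2)"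
        using E_pos[of x] by (intro mult_right_mono mult_left_mono) auto
      then show ?thesis by (simp add: w_def power2_eq_square algebra_simps)
    qed
    then show ?thesis
      unfolding wip_def
      by (subst integral_mult_right[symmetric], intro integral_le)
        (use u flat in \<open>auto intro!: integrable_on_mult_right has_integral_integrable[OF wip_has_integral]\<close>)
  qed
  ultimately show ?thesis by linarith
qed

lemma wip_energy_estimate:
  assumes u: "flat_at_ends u" and q: "flat_at_ends q" and "0 < n"
  shows "2 * lam * wip ((deriv ^^ (n - 1)) u) ((deriv ^^ (n - 1)) u)
       + \<alpha> * (wip ((deriv ^^ n) u) (\<lambda>x. q x + c * u x) + wip u ((deriv ^^ n) (\<lambda>x. q x + c * u x)))
       - \<alpha>^2 * c^2 * wip u u
     \<le> integral {0..L} (\<lambda>x. E x * (\<alpha> * q x + (deriv ^^ n) u x)^2)"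
proof -
  define g A B where "g = (\<lambda>x. q x + c * u x)" and "A = (deriv ^^ n) u" and "B = (deriv_adj ^^ n) u"
  have flat: "flat_at_ends g" "flat_at_ends A" "flat_at_ends B"
    using flat_at_ends_lincomb[OF q u, of 1 c] unfolding g_def A_def B_def
    by (simp_all add: flat_at_ends_funpow_deriv flat_at_ends_funpow_deriv_adj u)
  have pointwise: "1/2 * (E x * A x * A x) + (- 1/2) * (E x * B x * B x) + \<alpha> * (E x * A x * g x)
      + \<alpha> * (E x * B x * g x) + (- (\<alpha>^2 * c^2)) * (E x * u x * u x) \<le> E x * (\<alpha> * q x + A x)^2" for x
  proof -
    have "E x * (\<alpha> * q x + A x)^2 - (1/2 * (E x * A x * A x) + (- 1/2) * (E x * B x * B x)
        + \<alpha> * (E x * A x * g x) + \<alpha> * (E x * B x * g x) + (- (\<alpha>^2 * c^2)) * (E x * u x * u x))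
        = E x * ((A x + \<alpha> * q x - \<alpha> * c * u x)^2 + (B x - \<alpha> * g x)^2) / 2"
      by (simp add: g_def power2_eq_square algebra_simps)
    also have "\<dots> \<ge> 0" using E_pos[of x] by simp
    finally show ?thesis by simp
  qed
  have "((\<lambda>x. 1/2 * (E x * A x * A x) + (- 1/2) * (E x * B x * B x) + \<alpha> * (E x * A x * g x)
      + \<alpha> * (E x * B x * g x) + (- (\<alpha>^2 * c^2)) * (E x * u x * u x)) has_integral
      1/2 * wip A A + (- 1/2) * wip B B + \<alpha> * wip A g + \<alpha> * wip B g + (- (\<alpha>^2 * c^2)) * wip u u) {0..L}"
    using flat u by (intro has_integral_add has_integral_mult_right wip_has_integral)
  moreover have "((\<lambda>x. E x * (\<alpha> * q x + A x)^2) has_integral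
      integral {0..L} (\<lambda>x. E x * (\<alpha> * q x + A x)^2)) {0..L}"
    using flat q
    by (intro integrable_integral integrable_continuous_real continuous_intros
        E_continuous_on flat_at_ends_continuous_on)
  ultimately have "1/2 * wip A A + (- 1/2) * wip B B + \<alpha> * wip A g + \<alpha> * wip B g + (- (\<alpha>^2 * c^2)) * wip u u
      \<le> integral {0..L} (\<lambda>x. E x * (\<alpha> * q x + A x)^2)"
    using pointwise by (rule has_integral_le)
  moreover have "wip B g = wip u ((deriv ^^ n) g)"
    unfolding B_def by (rule wip_funpow_deriv_adjoint[OF u flat(1)])
  moreover have "4 * lam * wip ((deriv ^^ (n - 1)) u) ((deriv ^^ (n - 1)) u) \<le> wip A A - wip B B"
    unfolding A_def B_def by (rule wip_funpow_deriv_gap[OF u \<open>0 < n\<close>])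
  ultimately show ?thesis
    unfolding A_def g_def by (simp add: algebra_simps)
qed

end

section \<open>The Carleman estimate\<close>

text \<open>The absorption step: geometric growth of \<open>M\<close> lets the top-order bound control every
  lower-order term together with the zeroth-order error \<open>K * M 0\<close>.\<close>

lemma sum_lower_order_le:
  fixes M :: "nat \<Rightarrow> real" and lam d K R :: real
  assumes M_nonneg: "\<And>m. 0 \<le> M m"
    and growth: "\<And>m. 4 * lam^2 * d^2 * M m \<le> M (Suc m)"
    and "1 \<le> 4 * lam^2 * d^2" and "0 < lam" and "0 < d" and "2 \<le> n"
    and top: "2 * lam * M (n - 1) - K * M 0 \<le> R" and K: "K \<le> lam * (4 * lam^2 * d^2)"
  shows "(\<Sum>m<n. lam ^ (2*n - 2*m - 1) * M m) \<le> (\<Sum>m<n. (1 / (4 * d^2)) ^ (n - 1 - m)) * R"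
proof -
  define q where "q = 4 * lam^2 * d^2"
  have q: "1 \<le> q" using assms(3) by (simp add: q_def)
  have iterate: "q ^ k * M m \<le> M (m + k)" for k m
  proof (induction k)
    case (Suc k)
    have "q ^ Suc k * M m \<le> q * M (m + k)"
      using Suc q by (simp add: mult.assoc mult_left_mono)
    also have "\<dots> \<le> M (m + Suc k)"
      using growth[of "m + k"] by (simp add: q_def)
    finally show ?case .
  qed simp
  have each_term: "lam ^ (2*n - 2*m - 1) * M m \<le> (1 / (4 * d^2)) ^ (n - 1 - m) * (lam * M (n - 1))"
    if "m < n" for m
  proof -
    define k where "k = n - 1 - m"
    have "2*n - 2*m - 1 = Suc (2 * k)"
      using that by (simp add: k_def)
    then have "lam ^ (2*n - 2*m - 1) = lam * (lam^2)^k"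
      by (simp add: power_mult)
    also have "(lam^2)^k = (1 / (4 * d^2)) ^ k * q ^ k"
      using \<open>0 < d\<close> by (simp add: q_def power_mult_distrib[symmetric])
    finally have "lam ^ (2*n - 2*m - 1) * M m = lam * (1 / (4 * d^2)) ^ k * (q ^ k * M m)"
      by simp
    also have "\<dots> \<le> lam * (1 / (4 * d^2)) ^ k * M (n - 1)"
      using iterate[of k m] that \<open>0 < lam\<close> by (intro mult_left_mono) (auto simp: k_def)
    finally show ?thesis by (simp add: k_def mult_ac)
  qed
  have "K * M 0 \<le> lam * q * M 0"
    using K M_nonneg[of 0] by (simp add: q_def mult_right_mono)
  also have "\<dots> \<le> lam * (q ^ (n - 1) * M 0)"
    using q \<open>2 \<le> n\<close> M_nonneg[of 0] \<open>0 < lam\<close>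
    by (simp add: mult.assoc mult_right_mono power_increasing[of 1 "n - 1" q, simplified])
  also have "\<dots> \<le> lam * M (n - 1)"
    using iterate[of "n - 1" 0] \<open>0 < lam\<close> by simp
  finally have "lam * M (n - 1) \<le> R"
    using top by linarith
  then have "(\<Sum>m<n. (1 / (4 * d^2)) ^ (n - 1 - m) * (lam * M (n - 1)))
      \<le> (\<Sum>m<n. (1 / (4 * d^2)) ^ (n - 1 - m)) * R"
    by (simp add: sum_distrib_right[symmetric] sum_nonneg mult_left_mono)
  with each_term show ?thesis
    by (meson lessThan_iff order.trans sum_mono)
qed

locale carleman_setting =
  fixes T L \<alpha> x0 t0 \<beta> lam :: real and n :: nat and \<psi> v :: "real \<times> real \<Rightarrow> real"
  assumes L_pos: "0 < L" and L_less_x0: "L < x0" and t0: "0 \<le> t0" "t0 \<le> T"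
    and lam_pos: "0 < lam" and n_ge_2: "2 \<le> n"
    and psi: "\<psi> = (\<lambda>(t, x). (x - x0)^2 - \<beta> * (t - t0)^2)"
    and v: "test_fun T L v"
begin

definition weight :: "real \<times> real \<Rightarrow> real" where
  "weight p = exp (2 * lam * \<psi> p)"

definition dxv :: "nat \<Rightarrow> real \<times> real \<Rightarrow> real" where
  "dxv m = iterpd (replicate m False) v"

definition dtv :: "real \<times> real \<Rightarrow> real" where
  "dtv = iterpd [True] v"

definition dtdxv :: "real \<times> real \<Rightarrow> real" where
  "dtdxv = iterpd (True # replicate n False) v"

definition energy :: "nat \<Rightarrow> real" where
  "energy m = integral ({0..T} \<times> {0..L}) (\<lambda>p. weight p * dxv m p ^ 2)"

definition rhs :: real where
  "rhs = integral ({0..T} \<times> {0..L}) (\<lambda>p. weight p * (\<alpha> * dtv p + dxv n p) ^ 2)"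

text \<open>The time derivative of \<open>weight * v * \<partial>\<^sub>x\<^sup>n v\<close>.\<close>

definition cross_term :: "real \<times> real \<Rightarrow> real" where
  "cross_term p = weight p * (dxv n p * dtv p + dxv 0 p * dtdxv p
      + 4 * lam * \<beta> * (t0 - fst p) * dxv 0 p * dxv n p)"

definition error_const :: real where
  "error_const = 4 * \<alpha>^2 * lam^2 * \<beta>^2 * T^2"

lemma smooth2_v: "smooth2 v"
  using v unfolding test_fun_def by blast

lemma support_v: "p \<in> closure {p. v p \<noteq> 0} \<Longrightarrow> p \<in> {0<..<T} \<times> {0<..<L}"
  using v unfolding test_fun_def by blast

lemma iterpd_v_boundary:
  "iterpd ws v (t, 0) = 0" "iterpd ws v (t, L) = 0" "iterpd ws v (0, x) = 0" "iterpd ws v (T, x) = 0"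
  by (rule iterpd_eq_0_outside_support, use support_v in force)+

lemma weight_eq: "weight = (\<lambda>p. exp (2 * lam * ((snd p - x0)^2 - \<beta> * (fst p - t0)^2)))"
  unfolding weight_def[abs_def] by (simp add: psi case_prod_beta)

lemma weight_pos: "0 < weight p"
  by (simp add: weight_def)

lemma weight_continuous_on: "continuous_on S weight"
  unfolding weight_eq by (intro continuous_intros)

lemma weight_DERIV_x: "((\<lambda>x. weight (t, x)) has_real_derivative 4 * lam * (x - x0) * weight (t, x)) (at x)"
  unfolding weight_eq by (auto intro!: derivative_eq_intros simp: algebra_simps)

lemma weight_DERIV_t: "((\<lambda>s. weight (s, x)) has_real_derivative 4 * lam * \<beta> * (t0 - s) * weight (s, x)) (at s)"
  unfolding weight_eq by (auto intro!: derivative_eq_intros simp: algebra_simps)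

lemma continuous_on_iterpd_v: "continuous_on UNIV (iterpd ws v)"
  by (rule smooth2_continuous_iterpd[OF smooth2_v])

lemma carleman_weight_slice: "carleman_weight L lam x0 (\<lambda>x. weight (t, x))"
  by unfold_locales (use L_pos lam_pos weight_DERIV_x weight_pos in auto)

lemma flat_at_ends_slice: "carleman_weight.flat_at_ends L (\<lambda>y. iterpd ws v (t, y))"
  unfolding carleman_weight.flat_at_ends_def[OF carleman_weight_slice]
  using smooth2_DERIV_x[OF smooth2_v] iterpd_v_boundary
  by (intro exI[of _ "\<lambda>k y. iterpd (replicate k False @ ws) v (t, y)"]) auto

lemma funpow_deriv_slice:
  "(deriv ^^ k) (\<lambda>y. iterpd ws v (t, y)) = (\<lambda>y. iterpd (replicate k False @ ws) v (t, y))"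
proof (induction k)
  case (Suc k)
  have "deriv (\<lambda>y. iterpd (replicate k False @ ws) v (t, y)) y
      = iterpd (replicate (Suc k) False @ ws) v (t, y)" for y
    using smooth2_DERIV_x[OF smooth2_v, of "replicate k False @ ws" t y] by (simp add: DERIV_imp_deriv)
  with Suc show ?case by auto
qed simp

lemma funpow_deriv_dxv: "(deriv ^^ k) (\<lambda>y. dxv m (t, y)) = (\<lambda>y. dxv (k + m) (t, y))"
  using funpow_deriv_slice[of k "replicate m False" t] by (simp add: dxv_def replicate_add)

lemma funpow_deriv_dtv: "(deriv ^^ n) (\<lambda>y. dtv (t, y)) = (\<lambda>y. dtdxv (t, y))"
  using funpow_deriv_slice[of n "[True]" t]
  by (simp add: dtv_def dtdxv_def smooth2_iterpd_x_t_commute[OF smooth2_v])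

lemma flat_at_ends_dxv: "carleman_weight.flat_at_ends L (\<lambda>y. dxv m (t, y))"
  unfolding dxv_def by (rule flat_at_ends_slice)

lemma flat_at_ends_dtv: "carleman_weight.flat_at_ends L (\<lambda>y. dtv (t, y))"
  unfolding dtv_def by (rule flat_at_ends_slice)

lemma slice_hardy:
  "4 * lam^2 * (x0 - L)^2 * integral {0..L} (\<lambda>x. weight (t, x) * dxv m (t, x)^2)
    \<le> integral {0..L} (\<lambda>x. weight (t, x) * dxv (Suc m) (t, x)^2)"
proof -
  interpret W: carleman_weight L lam x0 "\<lambda>x. weight (t, x)"
    by (rule carleman_weight_slice)
  show ?thesis
    using W.wip_hardy[OF flat_at_ends_dxv[of m t]] funpow_deriv_dxv[of 1 m t] L_less_x0
    by (simp add: W.wip_self)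
qed

lemma slice_coefficient_bound:
  assumes "t \<in> {0..T}"
  shows "\<alpha>^2 * (2 * lam * \<beta> * (t0 - t))^2 \<le> error_const"
proof -
  have "(t0 - t)^2 \<le> T^2"
    using assms t0 by (intro power2_le_iff_abs_le[THEN iffD2]) auto
  then have "(4 * \<alpha>^2 * lam^2 * \<beta>^2) * (t0 - t)^2 \<le> (4 * \<alpha>^2 * lam^2 * \<beta>^2) * T^2"
    by (intro mult_left_mono) simp_all
  moreover have "\<alpha>^2 * (2 * lam * \<beta> * (t0 - t))^2 = (4 * \<alpha>^2 * lam^2 * \<beta>^2) * (t0 - t)^2"
    by (simp add: power_mult_distrib)
  ultimately show ?thesis
    unfolding error_const_def by linarith
qed

lemma slice_energy:
  assumes t: "t \<in> {0..T}"
  shows "2 * lam * integral {0..L} (\<lambda>x. weight (t, x) * dxv (n - 1) (t, x)^2)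
      + \<alpha> * integral {0..L} (\<lambda>x. cross_term (t, x))
      - error_const * integral {0..L} (\<lambda>x. weight (t, x) * dxv 0 (t, x)^2)
    \<le> integral {0..L} (\<lambda>x. weight (t, x) * (\<alpha> * dtv (t, x) + dxv n (t, x))^2)"
proof -
  interpret W: carleman_weight L lam x0 "\<lambda>x. weight (t, x)"
    by (rule carleman_weight_slice)
  define u q c where "u = (\<lambda>y. dxv 0 (t, y))" and "q = (\<lambda>y. dtv (t, y))"
    and "c = 2 * lam * \<beta> * (t0 - t)"
  define g where "g = (\<lambda>x. q x + c * u x)"
  have flat: "W.flat_at_ends u" "W.flat_at_ends q" "W.flat_at_ends g"
    using flat_at_ends_dxv[of 0 t] flat_at_ends_dtv[of t]
      W.flat_at_ends_lincomb[OF flat_at_ends_dtv[of t] flat_at_ends_dxv[of 0 t], of 1 c]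
    by (simp_all add: u_def q_def g_def)
  have du: "(deriv ^^ k) u = (\<lambda>y. dxv k (t, y))" for k
    using funpow_deriv_dxv[of k 0 t] by (simp add: u_def)
  have dg: "(deriv ^^ n) g = (\<lambda>x. dtdxv (t, x) + c * dxv n (t, x))"
    using W.funpow_deriv_lincomb[OF flat(2,1), of n 1 c] by (simp add: g_def q_def funpow_deriv_dtv du)
  have "((\<lambda>x. weight (t, x) * (deriv ^^ n) u x * g x + weight (t, x) * u x * (deriv ^^ n) g x)
      has_integral W.wip ((deriv ^^ n) u) g + W.wip u ((deriv ^^ n) g)) {0..L}"
    by (intro has_integral_add W.wip_has_integral flat W.flat_at_ends_funpow_deriv)
  moreover have "(\<lambda>x. weight (t, x) * (deriv ^^ n) u x * g x + weight (t, x) * u x * (deriv ^^ n) g x)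
      = (\<lambda>x. cross_term (t, x))"
    unfolding du dg by (simp add: g_def u_def q_def c_def cross_term_def algebra_simps)
  ultimately have cross: "W.wip ((deriv ^^ n) u) g + W.wip u ((deriv ^^ n) g)
      = integral {0..L} (\<lambda>x. cross_term (t, x))"
    by (metis integral_unique)
  have "\<alpha>^2 * c^2 * W.wip u u \<le> error_const * W.wip u u"
    using slice_coefficient_bound[OF t] W.wip_self_nonneg[OF flat(1)]
    by (simp add: c_def mult_right_mono)
  moreover have "0 < n" using n_ge_2 by simp
  note W.wip_energy_estimate[OF flat(1,2) this, of \<alpha> c, folded g_def]
  ultimately show ?thesis
    unfolding cross[unfolded du] du W.wip_self by (simp add: q_def u_def)
qed

lemma continuous_on_weighted_square: "continuous_on UNIV (\<lambda>p. weight p * dxv m p ^ 2)"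
  unfolding dxv_def by (intro continuous_intros weight_continuous_on continuous_on_iterpd_v)

lemma continuous_on_cross_term: "continuous_on UNIV cross_term"
  unfolding cross_term_def[abs_def] dxv_def dtv_def dtdxv_def
  by (intro continuous_intros weight_continuous_on continuous_on_iterpd_v)

lemma integral_cross_term: "integral ({0..T} \<times> {0..L}) cross_term = 0"
proof -
  have "integral ({0..T} \<times> {0..L}) cross_term
      = integral (cbox 0 T) (\<lambda>t. integral (cbox 0 L) (\<lambda>x. cross_term (t, x)))"
    using integral_rectangle[OF continuous_on_cross_term] by simp
  also have "\<dots> = integral (cbox 0 L) (\<lambda>x. integral (cbox 0 T) (\<lambda>t. cross_term (t, x)))"
    using continuous_on_subset[OF continuous_on_cross_term]
    by (intro integral_swap_continuous) (simp add: case_prod_eta)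
  also have "\<dots> = integral (cbox 0 L) (\<lambda>x. 0 :: real)"
  proof (rule integral_cong)
    fix x :: real
    define G where "G s = weight (s, x) * dxv 0 (s, x) * dxv n (s, x)" for s
    have "(G has_real_derivative cross_term (s, x)) (at s)" for s
      using smooth2_DERIV_t[OF smooth2_v, of "[]"] smooth2_DERIV_t[OF smooth2_v, of "replicate n False"]
      unfolding G_def cross_term_def dxv_def dtv_def dtdxv_def
      by (auto intro!: derivative_eq_intros weight_DERIV_t simp: algebra_simps)
    then have "((\<lambda>s. cross_term (s, x)) has_integral G T - G 0) {0..T}"
      using t0 by (intro fundamental_theorem_of_calculus)
        (auto simp: has_real_derivative_iff_has_vector_derivative[symmetric] intro: DERIV_subset)
    moreover have "G T = 0" "G 0 = 0"
      unfolding G_def dxv_def by (simp_all add: iterpd_v_boundary)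
    ultimately show "integral (cbox 0 T) (\<lambda>t. cross_term (t, x)) = 0"
      by (simp add: integral_unique)
  qed
  finally show ?thesis by simp
qed

lemma energy_nonneg: "0 \<le> energy m"
  unfolding energy_def
  by (intro integral_nonneg integrable_on_rectangle continuous_on_weighted_square)
    (simp add: weight_pos less_imp_le)

lemma energy_growth: "4 * lam^2 * (x0 - L)^2 * energy m \<le> energy (Suc m)"
  using integral_rectangle_mono[of "\<lambda>p. 4 * lam^2 * (x0 - L)^2 * (weight p * dxv m p ^ 2)"
      "\<lambda>p. weight p * dxv (Suc m) p ^ 2"] slice_hardy
  unfolding energy_def
  by (simp add: continuous_on_weighted_square continuous_on_mult_left)

lemma energy_rhs: "2 * lam * energy (n - 1) - error_const * energy 0 \<le> rhs"
proof -
  define f where "f p = 2 * lam * (weight p * dxv (n - 1) p ^ 2) + \<alpha> * cross_term p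
      + (- error_const) * (weight p * dxv 0 p ^ 2)" for p
  have cont_f: "continuous_on UNIV f"
    unfolding f_def[abs_def]
    by (intro continuous_intros continuous_on_weighted_square continuous_on_cross_term)
  have "integral ({0..T} \<times> {0..L}) f \<le> rhs"
    unfolding rhs_def
  proof (rule integral_rectangle_mono[OF cont_f])
    show "continuous_on UNIV (\<lambda>p. weight p * (\<alpha> * dtv p + dxv n p)^2)"
      unfolding dtv_def dxv_def by (intro continuous_intros weight_continuous_on continuous_on_iterpd_v)
    fix t assume t: "t \<in> {0..T}"
    have slice: "(\<lambda>x. h (t, x)) integrable_on {0..L}" if "continuous_on UNIV h" for h :: "real \<times> real \<Rightarrow> real"
      by (intro integrable_continuous_real continuous_on_slice_x that)
    have "integral {0..L} (\<lambda>x. f (t, x))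
        = 2 * lam * integral {0..L} (\<lambda>x. weight (t, x) * dxv (n - 1) (t, x) ^ 2)
          + \<alpha> * integral {0..L} (\<lambda>x. cross_term (t, x))
          + (- error_const) * integral {0..L} (\<lambda>x. weight (t, x) * dxv 0 (t, x) ^ 2)"
      unfolding f_def
      by (intro integral_lincomb3 slice continuous_on_weighted_square continuous_on_cross_term)
    with slice_energy[OF t]
    show "integral {0..L} (\<lambda>x. f (t, x))
        \<le> integral {0..L} (\<lambda>x. weight (t, x) * (\<alpha> * dtv (t, x) + dxv n (t, x))^2)"
      by linarith
  qed
  moreover have "integral ({0..T} \<times> {0..L}) f = 2 * lam * energy (n - 1)
      + \<alpha> * integral ({0..T} \<times> {0..L}) cross_term + (- error_const) * energy 0"
    unfolding f_def energy_def
    by (intro integral_lincomb3 integrable_on_rectangle continuous_on_weighted_square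
        continuous_on_cross_term)
  ultimately show ?thesis
    by (simp add: integral_cross_term)
qed

lemma carleman_estimate:
  assumes "1 / (2 * (x0 - L)) + \<alpha>^2 * \<beta>^2 * T^2 / (x0 - L)^2 < lam"
  shows "(\<Sum>m<n. integral ({0..T} \<times> {0..L}) (\<lambda>p. lam ^ (2*n - 2*m - 1) * weight p * dxv m p ^ 2))
    \<le> (\<Sum>m<n. (1 / (4 * (x0 - L)^2)) ^ (n - 1 - m)) * rhs"
proof -
  define d where "d = x0 - L"
  have d: "0 < d" using L_less_x0 by (simp add: d_def)
  have "0 \<le> 1 / (2 * d)" and "0 \<le> \<alpha>^2 * \<beta>^2 * T^2 / d^2"
    using d by simp_all
  then have "1 / (2 * d) \<le> lam" and "\<alpha>^2 * \<beta>^2 * T^2 / d^2 \<le> lam"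
    using assms unfolding d_def by linarith+
  then have "1 \<le> 2 * d * lam" and lam_bound: "\<alpha>^2 * \<beta>^2 * T^2 \<le> lam * d^2"
    using d by (simp_all add: pos_divide_le_eq mult_ac)
  then have "1 \<le> (2 * d * lam)^2"
    by (simp add: one_le_power)
  moreover have "4 * lam^2 * (\<alpha>^2 * \<beta>^2 * T^2) \<le> 4 * lam^2 * (lam * d^2)"
    using lam_bound by (intro mult_left_mono) simp_all
  ultimately have "1 \<le> 4 * lam^2 * d^2" and "error_const \<le> lam * (4 * lam^2 * d^2)"
    by (simp_all add: error_const_def power_mult_distrib mult_ac)
  then have "(\<Sum>m<n. lam ^ (2*n - 2*m - 1) * energy m) \<le> (\<Sum>m<n. (1 / (4 * d^2)) ^ (n - 1 - m)) * rhs"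
    using energy_nonneg energy_growth energy_rhs lam_pos d n_ge_2
    by (intro sum_lower_order_le) (simp_all add: d_def)
  then show ?thesis
    by (simp add: energy_def d_def mult.assoc)
qed

end

theorem mainTheorem2:
  fixes T L \<alpha> x0 t0 \<beta> :: real and n :: nat and \<psi> :: "real \<times> real \<Rightarrow> real"
  assumes "T > 0" and "L > 0" and "\<alpha> \<noteq> 0" and "n \<ge> 2" and "x0 > L"
    and "0 < t0" and "t0 < T" and "\<beta> > 0"
    and "\<psi> = (\<lambda>(t, x). (x - x0)^2 - \<beta> * (t - t0)^2)"
  shows "\<exists>lam0 > 0. \<exists>C > 0. \<forall>lam > lam0. \<forall>v. test_fun T L v \<longrightarrow>
    (\<Sum>m<n. integral ({0..T} \<times> {0..L})
        (\<lambda>p. lam ^ (2*n - 2*m - 1) * exp (2 * lam * \<psi> p) * (iterpd (replicate m False) v p)^2))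
    \<le> C * integral ({0..T} \<times> {0..L})
        (\<lambda>p. exp (2 * lam * \<psi> p) * (\<alpha> * iterpd [True] v p + iterpd (replicate n False) v p)^2)"
proof -
  define d where "d = x0 - L"
  define lam0 where "lam0 = 1 / (2 * d) + \<alpha>^2 * \<beta>^2 * T^2 / d^2"
  define C where "C = (\<Sum>m<n. (1 / (4 * d^2)) ^ (n - 1 - m))"
  have "0 < d" using \<open>x0 > L\<close> by (simp add: d_def)
  then have "0 < lam0" by (simp add: lam0_def add_pos_nonneg)
  moreover have "0 < C"
    unfolding C_def using \<open>n \<ge> 2\<close> \<open>0 < d\<close> by (intro sum_pos) (auto simp: lessThan_empty_iff)
  moreover have "(\<Sum>m<n. integral ({0..T} \<times> {0..L})
        (\<lambda>p. lam ^ (2*n - 2*m - 1) * exp (2 * lam * \<psi> p) * (iterpd (replicate m False) v p)^2))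
    \<le> C * integral ({0..T} \<times> {0..L})
        (\<lambda>p. exp (2 * lam * \<psi> p) * (\<alpha> * iterpd [True] v p + iterpd (replicate n False) v p)^2)"
    if "lam > lam0" and "test_fun T L v" for lam v
  proof -
    interpret carleman_setting T L \<alpha> x0 t0 \<beta> lam n \<psi> v
      using assms that \<open>0 < lam0\<close> by unfold_locales auto
    show ?thesis
      using carleman_estimate that(1)
      unfolding lam0_def C_def d_def weight_def dxv_def dtv_def rhs_def by simp
  qed
  ultimately show ?thesis by blast
qed

end
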